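(* Let $\mathcal C$ be a Riemannian annulus, i.e. a surface diffeomorphic to $\mathbb S^1\times[0,1]$ with a Riemannian metric, and let $M>0$ be its conformal modulus. Let $\nu\in\mathbb R\setminus\mathbb Z$ and let $\mu_1(\mathcal C,\nu)$ denote the first magnetic Neumann eigenvalue of $\mathcal C$ for a smooth closed $1$-form with flux $\nu$ around a boundary circle. Then $$|\mathcal C|\,\mu_1(\mathcal C,\nu)\le 4\pi M\min_{n\in\mathbb Z}|\nu-n|^2,$$ with equality if and only if $\mathcal C$ is homothetic to the flat cylinder $\mathcal C_M=\mathbb S^1\times[-M,M]$.
   Context: The conformal modulus of $\mathcal C$ is the unique $M>0$ such that $\mathcal C$ is conformally equivalent to the flat cylinder $\mathcal C_M=\mathbb S^1\times[-M,M]$ with metric $d\theta^2+dz^2$ (here $\mathbb S^1$ has length $2\pi$). For a smooth real $1$-form $A$, $d^Au=du-iuA$ on complex functions and $\mu_1(\mathcal C,A)=\min_{0\ne u\in H^1(\mathcal C)}\int_{\mathcal C}|d^Au|^2/\int_{\mathcal C}|u|^2$. Any two closed $1$-forms on $\mathcal C$ with the same flux $\nu=\frac1{2\pi}\oint A$ around a boundary circle give the same value, denoted $\mu_1(\mathcal C,\nu)$. *)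

theory Defs
  imports "HOL-Analysis.Analysis"
begin

text \<open>By the definition of the conformal modulus, a Riemannian annulus C of modulus M
is isometric to the flat cylinder S^1 x [-M,M] (coordinates theta, z) carrying the metric
rho * (dtheta^2 + dz^2) for a smooth positive conformal factor rho.  Functions on
S^1 x [-M,M] are represented as functions on real x real that are 2pi-periodic in theta;
the fundamental domain is [0,2pi] x [-M,M].\<close>

definition strip :: "real \<Rightarrow> (real \<times> real) set" where
  "strip M = UNIV \<times> {-M..M}"

definition fund_dom :: "real \<Rightarrow> (real \<times> real) set" where
  "fund_dom M = cbox (0, -M) (2*pi, M)"

definition theta_periodic :: "(real \<times> real \<Rightarrow> 'a) \<Rightarrow> bool" where
  "theta_periodic f \<longleftrightarrow> (\<forall>t z. f (t + 2*pi, z) = f (t, z))"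

definition d_theta :: "(real \<times> real \<Rightarrow> 'a::real_normed_vector) \<Rightarrow> real \<times> real \<Rightarrow> 'a" where
  "d_theta f x = frechet_derivative f (at x) (1, 0)"

definition d_z :: "(real \<times> real \<Rightarrow> 'a::real_normed_vector) \<Rightarrow> real \<times> real \<Rightarrow> 'a" where
  "d_z f x = frechet_derivative f (at x) (0, 1)"

coinductive smooth2 :: "(real \<times> real \<Rightarrow> real) \<Rightarrow> bool" where
  "(\<forall>x. f differentiable (at x)) \<Longrightarrow> smooth2 (d_theta f) \<Longrightarrow> smooth2 (d_z f) \<Longrightarrow> smooth2 f"

definition conf_factor :: "real \<Rightarrow> (real \<times> real \<Rightarrow> real) \<Rightarrow> bool" where
  "conf_factor M \<rho> \<longleftrightarrow> smooth2 \<rho> \<and> theta_periodic \<rho> \<and> (\<forall>x\<in>strip M. \<rho> x > 0)"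

definition area :: "real \<Rightarrow> (real \<times> real \<Rightarrow> real) \<Rightarrow> real" where
  "area M \<rho> = integral (fund_dom M) \<rho>"

definition trial_fun :: "(real \<times> real \<Rightarrow> complex) \<Rightarrow> bool" where
  "trial_fun u \<longleftrightarrow> theta_periodic u \<and> (\<forall>x. u differentiable (at x))
     \<and> continuous_on UNIV (d_theta u) \<and> continuous_on UNIV (d_z u)"

text \<open>Magnetic Dirichlet energy for the closed 1-form A = nu dtheta (flux nu).  In dimension two
the Dirichlet energy is conformally invariant, so it equals the flat one.\<close>
definition mag_energy :: "real \<Rightarrow> real \<Rightarrow> (real \<times> real \<Rightarrow> complex) \<Rightarrow> real" where
  "mag_energy M \<nu> u = integral (fund_dom M)
     (\<lambda>x. (cmod (d_theta u x - \<i> * u x * of_real \<nu>))\<^sup>2 + (cmod (d_z u x))\<^sup>2)"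

definition l2_mass :: "real \<Rightarrow> (real \<times> real \<Rightarrow> real) \<Rightarrow> (real \<times> real \<Rightarrow> complex) \<Rightarrow> real" where
  "l2_mass M \<rho> u = integral (fund_dom M) (\<lambda>x. \<rho> x * (cmod (u x))\<^sup>2)"

definition mu1 :: "real \<Rightarrow> (real \<times> real \<Rightarrow> real) \<Rightarrow> real \<Rightarrow> real" where
  "mu1 M \<rho> \<nu> = Inf {mag_energy M \<nu> u / l2_mass M \<rho> u | u. trial_fun u \<and> l2_mass M \<rho> u > 0}"

definition homothetic_flat :: "real \<Rightarrow> (real \<times> real \<Rightarrow> real) \<Rightarrow> bool" where
  "homothetic_flat M \<rho> \<longleftrightarrow> (\<exists>c>0. \<forall>x\<in>strip M. \<rho> x = c)"

end

theory Submission
  imports Defs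
begin

text \<open>Write \<open>\<nu> = n + \<beta>\<close> with \<open>n\<close> the nearest integer, so \<open>\<bar>\<beta>\<bar> \<le> 1/2\<close> and \<open>\<beta>\<^sup>2\<close> is the minimum
in the statement.  Multiplying trial functions by \<open>exp (i n \<theta>)\<close> is a gauge transformation, so the
eigenvalue for flux \<open>\<nu>\<close> equals the one for flux \<open>\<beta>\<close>.  The constant function has energy
\<open>4 pi M \<beta>\<^sup>2\<close> and mass \<open>|C|\<close>, which gives the inequality.  On the flat cylinder the bound is attained:
on every circle \<open>z = const\<close> the magnetic Wirtinger inequality
\<open>\<integral> |\<partial>\<^sub>\<theta> u - i \<beta> u|\<^sup>2 \<ge> \<beta>\<^sup>2 \<integral> |u|\<^sup>2\<close> holds for \<open>\<bar>\<beta>\<bar> \<le> 1/2\<close>; it follows from the ordinary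
Wirtinger inequality, which is proved with a Riccati (tangent) substitution.  Conversely, if
equality holds, every test function \<open>1 + t (\<rho> - c)\<close>, with \<open>c\<close> the mean of \<open>\<rho>\<close>, has Rayleigh
quotient at least \<open>\<mu>\<^sub>1\<close>; comparing the terms linear in \<open>t\<close> forces \<open>\<integral> (\<rho> - c)\<^sup>2 = 0\<close>, so the conformal
factor is constant.\<close>

section \<open>Wirtinger inequalities on the circle\<close>

lemma has_integral_interval_continuous:
  fixes g :: "real \<Rightarrow> 'a::banach"
  assumes "continuous_on UNIV g"
  shows "(g has_integral integral {a..b} g) {a..b}"
  by (intro integrable_integral integrable_continuous_interval continuous_on_subset[OF assms]) simp

lemma integral_nonneg_if_nonneg:
  fixes f :: "'a::euclidean_space \<Rightarrow> real"
  assumes "\<And>x. x \<in> S \<Longrightarrow> 0 \<le> f x"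
  shows "0 \<le> integral S f"
  by (cases "f integrable_on S")
    (simp_all add: Henstock_Kurzweil_Integration.integral_nonneg assms not_integrable_integral)

lemma integral_periodic_shift:
  fixes g :: "real \<Rightarrow> real"
  assumes cont: "continuous_on UNIV g" and periodic: "\<And>x. g (x + p) = g x"
    and a: "0 \<le> a" "a \<le> p"
  shows "integral {a..a+p} g = integral {0..p} g"
proof -
  have int: "g integrable_on {u..v}" for u v
    by (intro integrable_continuous_interval continuous_on_subset[OF cont]) auto
  have "g \<circ> (+) p = g" using periodic by (auto simp: fun_eq_iff add.commute)
  then have shift: "integral {p..a+p} g = integral {0..a} g"
    using integral_shift_Icc_real[of 0 a g p] by (simp add: add.commute)
  have "integral {a..a+p} g = integral {a..p} g + integral {p..a+p} g"
    using Henstock_Kurzweil_Integration.integral_combine[where a=a and c=p and b="a+p" and f=g] a int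
    by simp
  also have "\<dots> = integral {0..a} g + integral {a..p} g" using shift by simp
  also have "\<dots> = integral {0..p} g"
    using Henstock_Kurzweil_Integration.integral_combine[where a=0 and c=a and b=p and f=g] a int
    by simp
  finally show ?thesis .
qed

lemma has_real_derivative_Riccati_tan:
  fixes k m x :: real
  assumes k: "0 < k" "k < 1" and x: "\<bar>x - m\<bar> \<le> pi/2"
  shows "((\<lambda>x. - k * tan (k * (x - m))) has_real_derivative - k\<^sup>2 - (- k * tan (k * (x - m)))\<^sup>2) (at x)"
proof -
  have "\<bar>k * (x - m)\<bar> \<le> k * (pi/2)"
    using k x unfolding abs_mult by (intro mult_mono) auto
  also have "\<dots> < pi/2" using k by simp
  finally have cos_nz: "cos (k * (x - m)) \<noteq> 0"
    by (intro cos_gt_zero_pi[THEN less_imp_neq, symmetric]) auto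
  have "((\<lambda>x. - k * tan (k * (x - m))) has_real_derivative
      - k * (inverse ((cos (k * (x - m)))\<^sup>2) * (k * 1))) (at x)"
    by (rule DERIV_cmult, rule DERIV_chain2[of tan _ "\<lambda>x. k * (x - m)", OF DERIV_tan[OF cos_nz]])
      (auto intro!: derivative_eq_intros)
  moreover have "inverse ((cos (k * (x - m)))\<^sup>2) = 1 + (tan (k * (x - m)))\<^sup>2"
    using tan_sec[OF cos_nz] by (simp add: power_inverse)
  ultimately show ?thesis
    by (simp add: power2_eq_square algebra_simps)
qed

lemma Wirtinger_Dirichlet:
  fixes h h' :: "real \<Rightarrow> real"
  assumes deriv: "\<And>x. (h has_real_derivative h' x) (at x)" and cont: "continuous_on UNIV h'"
    and left: "h a = 0" and right: "h (a + pi) = 0"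
  shows "integral {a..a+pi} (\<lambda>x. (h x)\<^sup>2) \<le> integral {a..a+pi} (\<lambda>x. (h' x)\<^sup>2)"
proof (rule field_le_mult_one_interval)
  fix z :: real assume z: "0 < z" "z < 1"
  define k where "k = sqrt z"
  have k: "0 < k" "k < 1" "k\<^sup>2 = z" using z by (auto simp: k_def real_sqrt_lt_1_iff)
  define \<phi> where "\<phi> x = - k * tan (k * (x - (a + pi/2)))" for x
  \<comment> \<open>Since \<open>\<phi>' = - z - \<phi>\<^sup>2\<close>, \<open>h'\<^sup>2 - z h\<^sup>2 = (h' - \<phi> h)\<^sup>2 + (\<phi> h\<^sup>2)'\<close> and the boundary terms vanish.\<close>
  define F' where "F' x = (- z - (\<phi> x)\<^sup>2) * (h x)\<^sup>2 + 2 * \<phi> x * h x * h' x" for x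
  have hcont: "continuous_on UNIV h"
    using deriv by (meson DERIV_isCont continuous_at_imp_continuous_on)
  have "((\<lambda>x. \<phi> x * (h x)\<^sup>2) has_vector_derivative F' x) (at x within {a..a+pi})" if "x \<in> {a..a+pi}" for x
  proof -
    have "\<bar>x - (a + pi/2)\<bar> \<le> pi/2" using that by (simp add: abs_le_iff field_simps)
    with has_real_derivative_Riccati_tan[OF k(1,2)]
    have "(\<phi> has_real_derivative - z - (\<phi> x)\<^sup>2) (at x)"
      unfolding k(3) by (simp add: \<phi>_def[abs_def])
    moreover have "((\<lambda>x. (h x)\<^sup>2) has_real_derivative (h' x * h x + h' x * h x)) (at x)"
      unfolding power2_eq_square by (rule DERIV_mult[OF deriv deriv])
    ultimately have "((\<lambda>x. \<phi> x * (h x)\<^sup>2) has_real_derivative F' x) (at x)"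
      using DERIV_mult unfolding F'_def by (fastforce simp: algebra_simps)
    then show ?thesis
      by (simp add: has_real_derivative_iff_has_vector_derivative has_vector_derivative_at_within)
  qed
  then have "(F' has_integral 0) {a..a+pi}"
    using fundamental_theorem_of_calculus[of a "a+pi" "\<lambda>x. \<phi> x * (h x)\<^sup>2" F'] by (simp add: left right)
  then have "((\<lambda>x. (h' x)\<^sup>2 - z * (h x)\<^sup>2 - F' x) has_integral
      integral {a..a+pi} (\<lambda>x. (h' x)\<^sup>2) - z * integral {a..a+pi} (\<lambda>x. (h x)\<^sup>2) - 0) {a..a+pi}"
    by (intro has_integral_diff has_integral_mult_right has_integral_interval_continuous
        continuous_intros cont hcont)
  moreover have "(h' x)\<^sup>2 - z * (h x)\<^sup>2 - F' x = (h' x - \<phi> x * h x)\<^sup>2" for x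
    by (simp add: F'_def power2_eq_square algebra_simps)
  ultimately have "((\<lambda>x. (h' x - \<phi> x * h x)\<^sup>2) has_integral
      integral {a..a+pi} (\<lambda>x. (h' x)\<^sup>2) - z * integral {a..a+pi} (\<lambda>x. (h x)\<^sup>2) - 0) {a..a+pi}"
    by simp
  then have "0 \<le> integral {a..a+pi} (\<lambda>x. (h' x)\<^sup>2) - z * integral {a..a+pi} (\<lambda>x. (h x)\<^sup>2) - 0"
    by (rule has_integral_nonneg) simp
  then show "z * integral {a..a+pi} (\<lambda>x. (h x)\<^sup>2) \<le> integral {a..a+pi} (\<lambda>x. (h' x)\<^sup>2)"
    by simp
qed

lemma periodic_exists_half_period_eq:
  fixes f :: "real \<Rightarrow> real"
  assumes "continuous_on UNIV f" and "f (2*pi) = f 0"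
  obtains x0 where "0 \<le> x0" "x0 \<le> pi" "f x0 = f (x0 + pi)"
proof -
  define G where "G x = f x - f (x + pi)" for x
  have "continuous_on {0..pi} G" unfolding G_def
    by (intro continuous_intros continuous_on_compose2[OF assms(1)]) auto
  moreover have "G pi = - G 0" unfolding G_def using assms(2) by simp
  ultimately obtain x0 where "0 \<le> x0" "x0 \<le> pi" "G x0 = 0"
    using IVT'[of G 0 0 pi] IVT2'[of G pi 0 0] by (cases "G 0 \<le> 0") force+
  then show ?thesis using that by (simp add: G_def)
qed

lemma Wirtinger_periodic:
  fixes f f' :: "real \<Rightarrow> real"
  assumes deriv: "\<And>x. (f has_real_derivative f' x) (at x)" and cont: "continuous_on UNIV f'"
    and periodic: "\<And>x. f (x + 2*pi) = f x" and periodic': "\<And>x. f' (x + 2*pi) = f' x"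
  obtains c where "integral {0..2*pi} (\<lambda>x. (f x - c)\<^sup>2) \<le> integral {0..2*pi} (\<lambda>x. (f' x)\<^sup>2)"
proof -
  have fcont: "continuous_on UNIV f"
    using deriv by (meson DERIV_isCont continuous_at_imp_continuous_on)
  obtain x0 where x0: "0 \<le> x0" "x0 \<le> pi" "f x0 = f (x0 + pi)"
    using periodic_exists_half_period_eq[OF fcont] periodic[of 0] by auto
  define c where "c = f x0"
  have deriv_c: "((\<lambda>x. f x - c) has_real_derivative f' x) (at x)" for x
    by (auto intro!: derivative_eq_intros deriv)
  have first_half: "integral {x0..x0+pi} (\<lambda>x. (f x - c)\<^sup>2) \<le> integral {x0..x0+pi} (\<lambda>x. (f' x)\<^sup>2)"
    by (rule Wirtinger_Dirichlet[OF deriv_c cont]) (use x0 in \<open>simp_all add: c_def\<close>)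
  have "integral {x0+pi..x0+pi+pi} (\<lambda>x. (f x - c)\<^sup>2) \<le> integral {x0+pi..x0+pi+pi} (\<lambda>x. (f' x)\<^sup>2)"
    by (rule Wirtinger_Dirichlet[OF deriv_c cont])
      (use x0 periodic[of x0] in \<open>simp_all add: c_def algebra_simps\<close>)
  then have second_half:
    "integral {x0+pi..x0+2*pi} (\<lambda>x. (f x - c)\<^sup>2) \<le> integral {x0+pi..x0+2*pi} (\<lambda>x. (f' x)\<^sup>2)"
    by (simp add: algebra_simps)
  have cont1: "continuous_on UNIV (\<lambda>x. (f x - c)\<^sup>2)" and cont2: "continuous_on UNIV (\<lambda>x. (f' x)\<^sup>2)"
    by (intro continuous_intros fcont cont)+
  have split: "integral {x0..x0+2*pi} g = integral {x0..x0+pi} g + integral {x0+pi..x0+2*pi} g"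
    if "continuous_on UNIV g" for g :: "real \<Rightarrow> real"
    using Henstock_Kurzweil_Integration.integral_combine[where a=x0 and c="x0+pi" and b="x0+2*pi" and f=g]
      integrable_continuous_interval[OF continuous_on_subset[OF that]] by simp
  have "integral {0..2*pi} (\<lambda>x. (f x - c)\<^sup>2) = integral {x0..x0+2*pi} (\<lambda>x. (f x - c)\<^sup>2)"
    by (rule integral_periodic_shift[OF cont1, symmetric]) (use x0 periodic in auto)
  also have "\<dots> \<le> integral {x0..x0+2*pi} (\<lambda>x. (f' x)\<^sup>2)"
    unfolding split[OF cont1] split[OF cont2] using first_half second_half by simp
  also have "\<dots> = integral {0..2*pi} (\<lambda>x. (f' x)\<^sup>2)"
    by (rule integral_periodic_shift[OF cont2]) (use x0 periodic' in auto)
  finally show ?thesis by (rule that)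
qed

lemma Wirtinger_periodic_complex:
  fixes V V' :: "real \<Rightarrow> complex"
  assumes deriv: "\<And>x. (V has_vector_derivative V' x) (at x)" and cont: "continuous_on UNIV V'"
    and periodic: "\<And>x. V (x + 2*pi) = V x" and periodic': "\<And>x. V' (x + 2*pi) = V' x"
  obtains c where "integral {0..2*pi} (\<lambda>x. (cmod (V x - c))\<^sup>2) \<le> integral {0..2*pi} (\<lambda>x. (cmod (V' x))\<^sup>2)"
proof -
  have Vcont: "continuous_on UNIV V"
    using deriv by (meson has_vector_derivative_continuous continuous_at_imp_continuous_on)
  obtain c1 where re: "integral {0..2*pi} (\<lambda>x. (Re (V x) - c1)\<^sup>2) \<le> integral {0..2*pi} (\<lambda>x. (Re (V' x))\<^sup>2)"
    by (rule Wirtinger_periodic[of "\<lambda>x. Re (V x)" "\<lambda>x. Re (V' x)"])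
      (auto intro!: has_field_derivative_Re deriv continuous_intros cont simp: periodic periodic')
  obtain c2 where im: "integral {0..2*pi} (\<lambda>x. (Im (V x) - c2)\<^sup>2) \<le> integral {0..2*pi} (\<lambda>x. (Im (V' x))\<^sup>2)"
    by (rule Wirtinger_periodic[of "\<lambda>x. Im (V x)" "\<lambda>x. Im (V' x)"])
      (auto intro!: has_field_derivative_Im deriv continuous_intros cont simp: periodic periodic')
  have integral_cmod_sq: "integral {0..2*pi} (\<lambda>x. (cmod (W x - c))\<^sup>2)
      = integral {0..2*pi} (\<lambda>x. (Re (W x) - Re c)\<^sup>2) + integral {0..2*pi} (\<lambda>x. (Im (W x) - Im c)\<^sup>2)"
    if "continuous_on UNIV W" for W c
    unfolding cmod_power2 by (subst integral_add[symmetric])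
      (auto intro!: integrable_continuous_interval continuous_intros continuous_on_subset[OF that])
  show ?thesis
  proof (rule that[of "Complex c1 c2"])
    show "integral {0..2*pi} (\<lambda>x. (cmod (V x - Complex c1 c2))\<^sup>2) \<le> integral {0..2*pi} (\<lambda>x. (cmod (V' x))\<^sup>2)"
      using integral_cmod_sq[OF Vcont, of "Complex c1 c2"] integral_cmod_sq[OF cont, of 0] re im by simp
  qed
qed

text \<open>Integrated with \<open>a = V'\<close>, \<open>v = V\<close> and \<open>c\<close> the constant of the Wirtinger inequality, the left-hand
  side becomes nonnegative: the \<open>Im\<close> term integrates to zero because \<open>V\<close> is periodic.\<close>

lemma cmod_magnetic_sq_ge:
  fixes a v c :: complex and \<beta> :: real
  assumes "\<bar>\<beta>\<bar> \<le> 1/2"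
  shows "((cmod a)\<^sup>2 - (cmod (v - c))\<^sup>2) / 2 - 2 * \<beta> * Im (a * cnj c)
    \<le> (cmod (a - \<i> * v * of_real \<beta>))\<^sup>2 - \<beta>\<^sup>2 * (cmod v)\<^sup>2"
proof -
  define b where "b = v - c"
  have "(2*\<beta>)\<^sup>2 \<le> 1" unfolding abs_square_le_1 using assms by (simp add: abs_mult)
  then have "0 \<le> ((Re a + 2*\<beta>*Im b)\<^sup>2 + (Im a - 2*\<beta>*Re b)\<^sup>2 + (1 - (2*\<beta>)\<^sup>2) * ((Re b)\<^sup>2 + (Im b)\<^sup>2)) / 2"
    by (intro divide_nonneg_pos add_nonneg_nonneg mult_nonneg_nonneg) auto
  also have "\<dots> = (cmod (a - \<i> * v * of_real \<beta>))\<^sup>2 - \<beta>\<^sup>2 * (cmod v)\<^sup>2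
      - (((cmod a)\<^sup>2 - (cmod (v - c))\<^sup>2) / 2 - 2 * \<beta> * Im (a * cnj c))"
    unfolding cmod_power2 b_def by (simp add: power2_eq_square field_simps)
  finally show ?thesis by simp
qed

lemma magnetic_Wirtinger:
  fixes V V' :: "real \<Rightarrow> complex" and \<beta> :: real
  assumes deriv: "\<And>x. (V has_vector_derivative V' x) (at x)" and cont: "continuous_on UNIV V'"
    and periodic: "\<And>x. V (x + 2*pi) = V x" and periodic': "\<And>x. V' (x + 2*pi) = V' x"
    and \<beta>: "\<bar>\<beta>\<bar> \<le> 1/2"
  shows "\<beta>\<^sup>2 * integral {0..2*pi} (\<lambda>x. (cmod (V x))\<^sup>2)
    \<le> integral {0..2*pi} (\<lambda>x. (cmod (V' x - \<i> * V x * of_real \<beta>))\<^sup>2)"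
proof -
  have Vcont: "continuous_on UNIV V"
    using deriv by (meson has_vector_derivative_continuous continuous_at_imp_continuous_on)
  obtain c where Wirtinger:
    "integral {0..2*pi} (\<lambda>x. (cmod (V x - c))\<^sup>2) \<le> integral {0..2*pi} (\<lambda>x. (cmod (V' x))\<^sup>2)"
    using Wirtinger_periodic_complex[OF deriv cont periodic periodic'] by blast
  have "(V' has_integral V (2*pi) - V 0) {0..2*pi}"
    by (intro fundamental_theorem_of_calculus) (auto intro: has_vector_derivative_at_within deriv)
  then have "(V' has_integral 0) {0..2*pi}" using periodic[of 0] by simp
  from has_integral_Im[OF has_integral_mult_left[OF this, of "cnj c"]]
  have "((\<lambda>x. Im (V' x * cnj c)) has_integral 0) {0..2*pi}" by simp
  then have "((\<lambda>x. ((cmod (V' x))\<^sup>2 - (cmod (V x - c))\<^sup>2) / 2 - 2 * \<beta> * Im (V' x * cnj c)) has_integral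
      (integral {0..2*pi} (\<lambda>x. (cmod (V' x))\<^sup>2) - integral {0..2*pi} (\<lambda>x. (cmod (V x - c))\<^sup>2)) / 2
        - 2 * \<beta> * 0) {0..2*pi}"
    by (intro has_integral_diff has_integral_divide has_integral_mult_right
        has_integral_interval_continuous continuous_intros cont Vcont)
  moreover have "((\<lambda>x. (cmod (V' x - \<i> * V x * of_real \<beta>))\<^sup>2 - \<beta>\<^sup>2 * (cmod (V x))\<^sup>2) has_integral
      integral {0..2*pi} (\<lambda>x. (cmod (V' x - \<i> * V x * of_real \<beta>))\<^sup>2)
      - \<beta>\<^sup>2 * integral {0..2*pi} (\<lambda>x. (cmod (V x))\<^sup>2)) {0..2*pi}"
    by (intro has_integral_diff has_integral_mult_right has_integral_interval_continuous
        continuous_intros cont Vcont)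
  ultimately have "(integral {0..2*pi} (\<lambda>x. (cmod (V' x))\<^sup>2)
        - integral {0..2*pi} (\<lambda>x. (cmod (V x - c))\<^sup>2)) / 2 - 2 * \<beta> * 0
      \<le> integral {0..2*pi} (\<lambda>x. (cmod (V' x - \<i> * V x * of_real \<beta>))\<^sup>2)
        - \<beta>\<^sup>2 * integral {0..2*pi} (\<lambda>x. (cmod (V x))\<^sup>2)"
    by (rule has_integral_le) (rule cmod_magnetic_sq_ge[OF \<beta>])
  with Wirtinger show ?thesis by simp
qed

lemma integral_cbox_nonneg_if_slices_nonneg:
  fixes H :: "real \<times> real \<Rightarrow> real"
  assumes "continuous_on (cbox (a, c) (b, d)) H"
    and "\<And>z. z \<in> {c..d} \<Longrightarrow> 0 \<le> integral {a..b} (\<lambda>t. H (t, z))"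
  shows "0 \<le> integral (cbox (a, c) (b, d)) H"
proof -
  have "integral (cbox (a, c) (b, d)) H = integral (cbox a b) (\<lambda>t. integral (cbox c d) (\<lambda>z. H (t, z)))"
    by (rule integral_prod_continuous[OF assms(1)])
  also have "\<dots> = integral (cbox c d) (\<lambda>z. integral (cbox a b) (\<lambda>t. H (t, z)))"
    by (rule integral_swap_continuous[where f = "\<lambda>t z. H (t, z)"]) (simp add: assms(1))
  also have "\<dots> \<ge> 0"
    by (rule integral_nonneg_if_nonneg) (simp add: assms(2))
  finally show ?thesis .
qed

lemma differentiable_imp_continuous_on_UNIV:
  assumes "\<And>x. f differentiable (at x)"
  shows "continuous_on UNIV f"
  using assms by (simp add: differentiable_imp_continuous_on differentiable_on_def)

lemma smooth2_D:
  "smooth2 f \<Longrightarrow> (\<forall>x. f differentiable (at x)) \<and> smooth2 (d_theta f) \<and> smooth2 (d_z f)"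
  by (erule smooth2.cases) simp

lemma conf_factor_C1:
  assumes "conf_factor M \<rho>"
  shows "\<And>x. \<rho> differentiable (at x)" and "theta_periodic \<rho>" and "continuous_on UNIV \<rho>"
    and "continuous_on UNIV (d_theta \<rho>)" and "continuous_on UNIV (d_z \<rho>)"
  using assms smooth2_D[of \<rho>] smooth2_D[of "d_theta \<rho>"] smooth2_D[of "d_z \<rho>"] unfolding conf_factor_def
  by (blast intro: differentiable_imp_continuous_on_UNIV)+

lemma trial_fun_continuous: "trial_fun u \<Longrightarrow> continuous_on UNIV u"
  unfolding trial_fun_def by (blast intro: differentiable_imp_continuous_on_UNIV)

lemma d_theta_eq: "(u has_derivative D) (at x) \<Longrightarrow> d_theta u x = D (1, 0)"
  using frechet_derivative_at[of u D x] unfolding d_theta_def by simp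

lemma d_z_eq: "(u has_derivative D) (at x) \<Longrightarrow> d_z u x = D (0, 1)"
  using frechet_derivative_at[of u D x] unfolding d_z_def by simp

lemma has_vector_derivative_theta_slice:
  fixes u :: "real \<times> real \<Rightarrow> 'a::real_normed_vector"
  assumes "u differentiable (at (t, z))"
  shows "((\<lambda>s. u (s, z)) has_vector_derivative d_theta u (t, z)) (at t)"
proof -
  obtain D where D: "(u has_derivative D) (at (t, z))"
    using assms by (auto simp: differentiable_def)
  have "((\<lambda>s. u (s, z)) has_derivative (\<lambda>h. D (h, 0))) (at t)"
    using has_derivative_compose[OF has_derivative_Pair[OF has_derivative_ident has_derivative_const] D]
    by simp
  moreover have "(\<lambda>h. D (h, 0)) = (\<lambda>h. h *\<^sub>R D (1, 0))"
  proof
    fix h :: real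
    have "(h, 0) = h *\<^sub>R (1::real, 0::real)" by simp
    then show "D (h, 0) = h *\<^sub>R D (1, 0)"
      by (simp only: linear_cmul[OF has_derivative_linear[OF D]])
  qed
  ultimately show ?thesis
    unfolding has_vector_derivative_def d_theta_eq[OF D] by simp
qed

lemma theta_periodic_d_theta:
  assumes diff: "\<And>x. u differentiable (at x)" and periodic: "theta_periodic u"
  shows "theta_periodic (d_theta u)"
  unfolding theta_periodic_def
proof (intro allI)
  fix t z
  have "(u has_derivative frechet_derivative u (at ((t, z) + (2*pi, 0)))) (at ((t, z) + (2*pi, 0)))"
    using diff frechet_derivative_works by blast
  from has_derivative_compose[OF has_derivative_add_const[OF has_derivative_ident] this]
  have "((\<lambda>x. u (x + (2*pi, 0))) has_derivative frechet_derivative u (at (t + 2*pi, z))) (at (t, z))"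
    by simp
  moreover have "(\<lambda>x. u (x + (2*pi, 0))) = u"
    using periodic by (auto simp: theta_periodic_def)
  ultimately show "d_theta u (t + 2*pi, z) = d_theta u (t, z)"
    unfolding d_theta_def by (metis frechet_derivative_at)
qed

lemma
  shows d_theta_const: "d_theta (\<lambda>_. c) = (\<lambda>_. 0)"
    and d_z_const: "d_z (\<lambda>_. c) = (\<lambda>_. 0)"
  by (rule ext, rule d_theta_eq, rule has_derivative_const)
    (rule ext, rule d_z_eq, rule has_derivative_const)

lemma trial_fun_const: "trial_fun (\<lambda>_. c)"
  by (simp add: trial_fun_def theta_periodic_def d_theta_const d_z_const)

lemma
  fixes w :: "real \<times> real \<Rightarrow> real"
  assumes diff: "\<And>x. w differentiable (at x)" and periodic: "theta_periodic w"
    and d_theta_cont: "continuous_on UNIV (d_theta w)" and d_z_cont: "continuous_on UNIV (d_z w)"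
  shows trial_fun_affine_of_real: "trial_fun (\<lambda>x. of_real (a + b * w x))"
    and d_theta_affine_of_real:
      "d_theta (\<lambda>x. complex_of_real (a + b * w x)) = (\<lambda>x. of_real (b * d_theta w x))"
    and d_z_affine_of_real:
      "d_z (\<lambda>x. complex_of_real (a + b * w x)) = (\<lambda>x. of_real (b * d_z w x))"
proof -
  have deriv: "((\<lambda>x. complex_of_real (a + b * w x)) has_derivative
      (\<lambda>h. of_real (b * frechet_derivative w (at x) h))) (at x)" for x
    using diff[of x] unfolding frechet_derivative_works
    by (auto intro!: derivative_eq_intros)
  show d_theta: "d_theta (\<lambda>x. complex_of_real (a + b * w x)) = (\<lambda>x. of_real (b * d_theta w x))"
    unfolding d_theta_def[of w] by (rule ext, rule d_theta_eq[OF deriv])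
  show d_z: "d_z (\<lambda>x. complex_of_real (a + b * w x)) = (\<lambda>x. of_real (b * d_z w x))"
    unfolding d_z_def[of w] by (rule ext, rule d_z_eq[OF deriv])
  have "(\<lambda>x. complex_of_real (a + b * w x)) differentiable (at x)" for x
    using deriv unfolding differentiable_def by blast
  moreover have "theta_periodic (\<lambda>x. complex_of_real (a + b * w x))"
    using periodic by (simp add: theta_periodic_def)
  ultimately show "trial_fun (\<lambda>x. of_real (a + b * w x))"
    unfolding trial_fun_def d_theta d_z by (simp add: continuous_intros d_theta_cont d_z_cont)
qed

lemma fund_dom_subset_strip: "fund_dom M \<subseteq> strip M"
  by (auto simp: fund_dom_def strip_def)

lemma has_integral_fund_dom:
  fixes f :: "real \<times> real \<Rightarrow> 'a::banach"
  assumes "continuous_on UNIV f"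
  shows "(f has_integral integral (fund_dom M) f) (fund_dom M)"
  unfolding fund_dom_def
  by (intro integrable_integral integrable_continuous continuous_on_subset[OF assms]) simp

lemma has_integral_const_fund_dom:
  assumes "M \<ge> 0"
  shows "((\<lambda>x. k) has_integral 4 * pi * M * k) (fund_dom M)"
  using has_integral_const[of k "(0, -M)" "(2*pi, M)"] assms
  by (simp add: fund_dom_def content_Pair mult.assoc)

lemma integral_fund_dom_eq_0_iff:
  fixes f :: "real \<times> real \<Rightarrow> real"
  assumes "M > 0" and "continuous_on UNIV f" and "\<And>x. x \<in> fund_dom M \<Longrightarrow> 0 \<le> f x"
  shows "integral (fund_dom M) f = 0 \<longleftrightarrow> (\<forall>x\<in>fund_dom M. f x = 0)"
proof -
  have "(pi, 0) \<in> box (0, -M) (2*pi, M)"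
    using assms(1) by (auto simp: mem_box Basis_prod_def inner_Pair)
  then show ?thesis
    using integral_cbox_eq_0_iff[OF continuous_on_subset[OF assms(2)]] assms(3)
    unfolding fund_dom_def by blast
qed

lemma conf_factor_pos: "conf_factor M \<rho> \<Longrightarrow> x \<in> fund_dom M \<Longrightarrow> \<rho> x > 0"
  using fund_dom_subset_strip unfolding conf_factor_def by blast

lemma area_pos:
  assumes "M > 0" and "conf_factor M \<rho>"
  shows "area M \<rho> > 0"
proof -
  have "(0, 0) \<in> fund_dom M" using assms(1) by (simp add: fund_dom_def)
  then have "\<not> (\<forall>x\<in>fund_dom M. \<rho> x = 0)"
    using conf_factor_pos[OF assms(2)] by fastforce
  moreover have "area M \<rho> = 0 \<longleftrightarrow> (\<forall>x\<in>fund_dom M. \<rho> x = 0)"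
    unfolding area_def
    by (rule integral_fund_dom_eq_0_iff[OF assms(1) conf_factor_C1(3)[OF assms(2)]])
      (simp add: conf_factor_pos[OF assms(2)] less_imp_le)
  moreover have "area M \<rho> \<ge> 0"
    unfolding area_def using conf_factor_pos[OF assms(2)]
    by (intro integral_nonneg_if_nonneg less_imp_le)
  ultimately show ?thesis by linarith
qed

lemma theta_periodic_int:
  assumes "theta_periodic f"
  shows "f (s + 2*pi * of_int k, z) = f (s, z)"
proof (induction k rule: int_induct[where k = 0])
  case (step1 i)
  then show ?case using assms[unfolded theta_periodic_def, rule_format, of "s + 2*pi * of_int i" z]
    by (simp add: algebra_simps)
next
  case (step2 i)
  then show ?case using assms[unfolded theta_periodic_def, rule_format, of "s + 2*pi * of_int (i - 1)" z]
    by (simp add: algebra_simps)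
qed simp

lemma theta_periodic_const_on_strip:
  assumes "theta_periodic f" and "\<And>x. x \<in> fund_dom M \<Longrightarrow> f x = c" and "x \<in> strip M"
  shows "f x = c"
proof (cases x)
  case (Pair s z)
  define k where "k = \<lfloor>s / (2*pi)\<rfloor>"
  have "of_int k \<le> s / (2*pi)" "s / (2*pi) < of_int k + 1"
    unfolding k_def by linarith+
  then have "0 \<le> s - 2*pi * of_int k" "s - 2*pi * of_int k \<le> 2*pi"
    by (simp_all add: field_simps)
  then have "(s - 2*pi * of_int k, z) \<in> fund_dom M"
    using assms(3) by (simp add: Pair fund_dom_def strip_def)
  then have "f (s - 2*pi * of_int k + 2*pi * of_int k, z) = c"
    using assms(1,2) theta_periodic_int by metis
  then show ?thesis by (simp add: Pair)
qed

section \<open>Gauge invariance\<close>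

definition gauge_transform :: "int \<Rightarrow> (real \<times> real \<Rightarrow> complex) \<Rightarrow> real \<times> real \<Rightarrow> complex" where
  "gauge_transform n u x = exp (\<i> * of_int n * of_real (fst x)) * u x"

lemma has_derivative_gauge_transform:
  assumes "(u has_derivative D) (at x)"
  shows "(gauge_transform n u has_derivative
    (\<lambda>h. exp (\<i> * of_int n * of_real (fst x)) * (D h + \<i> * of_int n * of_real (fst h) * u x))) (at x)"
proof -
  have "((\<lambda>y. \<i> * of_int n * of_real (fst y)) has_derivative (\<lambda>h. \<i> * of_int n * of_real (fst h))) (at x)"
    by (rule has_derivative_mult_right[OF has_derivative_of_real[OF has_derivative_fst[OF has_derivative_ident]]])
  from has_derivative_compose[OF this has_field_derivative_imp_has_derivative[OF DERIV_exp]]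
  have "((\<lambda>y. exp (\<i> * of_int n * of_real (fst y))) has_derivative
      (\<lambda>h. exp (\<i> * of_int n * of_real (fst x)) * (\<i> * of_int n * of_real (fst h)))) (at x)" .
  from has_derivative_mult[OF this assms] show ?thesis
    unfolding gauge_transform_def[abs_def] by (simp add: algebra_simps)
qed

lemma
  assumes "u differentiable (at x)"
  shows d_theta_gauge_transform: "d_theta (gauge_transform n u) x
      = exp (\<i> * of_int n * of_real (fst x)) * (d_theta u x + \<i> * of_int n * u x)"
    and d_z_gauge_transform: "d_z (gauge_transform n u) x = exp (\<i> * of_int n * of_real (fst x)) * d_z u x"
proof -
  have D: "(u has_derivative frechet_derivative u (at x)) (at x)"
    using assms frechet_derivative_works by blast
  show "d_theta (gauge_transform n u) x
      = exp (\<i> * of_int n * of_real (fst x)) * (d_theta u x + \<i> * of_int n * u x)"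
    using d_theta_eq[OF has_derivative_gauge_transform[OF D]] by (simp add: d_theta_def)
  show "d_z (gauge_transform n u) x = exp (\<i> * of_int n * of_real (fst x)) * d_z u x"
    using d_z_eq[OF has_derivative_gauge_transform[OF D]] by (simp add: d_z_def)
qed

lemma norm_gauge_transform [simp]: "cmod (gauge_transform n u x) = cmod (u x)"
  by (simp add: gauge_transform_def norm_mult norm_exp_eq_Re)

lemma trial_fun_gauge_transform:
  assumes "trial_fun u"
  shows "trial_fun (gauge_transform n u)"
proof -
  have diff: "\<And>x. u differentiable (at x)" and periodic: "theta_periodic u"
    and d_theta_cont: "continuous_on UNIV (d_theta u)" and d_z_cont: "continuous_on UNIV (d_z u)"
    using assms by (auto simp: trial_fun_def)
  have "exp (\<i> * of_int n * of_real (t + 2*pi)) = exp (\<i> * of_int n * of_real t)" for t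
    using exp_plus_2pin[of "\<i> * of_int n * of_real t" n] by (simp add: algebra_simps)
  then have "theta_periodic (gauge_transform n u)"
    using periodic by (simp add: theta_periodic_def gauge_transform_def)
  moreover have "gauge_transform n u differentiable (at x)" for x
    using has_derivative_gauge_transform diff unfolding differentiable_def by blast
  moreover have "continuous_on UNIV (d_theta (gauge_transform n u))"
    using d_theta_gauge_transform[OF diff]
    by (simp add: continuous_intros d_theta_cont trial_fun_continuous[OF assms])
  moreover have "continuous_on UNIV (d_z (gauge_transform n u))"
    using d_z_gauge_transform[OF diff] by (simp add: continuous_intros d_z_cont)
  ultimately show ?thesis by (simp add: trial_fun_def)
qed

lemma mag_energy_gauge_transform:
  assumes "trial_fun u"
  shows "mag_energy M \<nu> (gauge_transform n u) = mag_energy M (\<nu> - of_int n) u"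
proof -
  have diff: "u differentiable (at x)" for x using assms unfolding trial_fun_def by blast
  have "d_theta (gauge_transform n u) x - \<i> * gauge_transform n u x * of_real \<nu>
      = exp (\<i> * of_int n * of_real (fst x)) * (d_theta u x - \<i> * u x * of_real (\<nu> - of_int n))" for x
    by (simp add: d_theta_gauge_transform[OF diff] gauge_transform_def algebra_simps)
  then show ?thesis
    by (simp add: mag_energy_def d_z_gauge_transform[OF diff] norm_mult norm_exp_eq_Re)
qed

lemma l2_mass_gauge_transform: "l2_mass M \<rho> (gauge_transform n u) = l2_mass M \<rho> u"
  by (simp add: l2_mass_def)

lemma mu1_gauge_invariant: "mu1 M \<rho> (\<nu> - of_int n) = mu1 M \<rho> \<nu>"
proof -
  let ?Q = "\<lambda>\<nu> u. mag_energy M \<nu> u / l2_mass M \<rho> u"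
  have "{?Q (\<nu> - of_int n) u | u. trial_fun u \<and> l2_mass M \<rho> u > 0}
      = {?Q \<nu> v | v. trial_fun v \<and> l2_mass M \<rho> v > 0}"
  proof (intro set_eqI iffI)
    fix q assume "q \<in> {?Q (\<nu> - of_int n) u | u. trial_fun u \<and> l2_mass M \<rho> u > 0}"
    then obtain u where "q = ?Q (\<nu> - of_int n) u" "trial_fun u" "l2_mass M \<rho> u > 0" by blast
    then show "q \<in> {?Q \<nu> v | v. trial_fun v \<and> l2_mass M \<rho> v > 0}"
      by (intro CollectI exI[of _ "gauge_transform n u"])
        (simp add: trial_fun_gauge_transform mag_energy_gauge_transform l2_mass_gauge_transform)
  next
    fix q assume "q \<in> {?Q \<nu> v | v. trial_fun v \<and> l2_mass M \<rho> v > 0}"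
    then obtain v where "q = ?Q \<nu> v" "trial_fun v" "l2_mass M \<rho> v > 0" by blast
    then show "q \<in> {?Q (\<nu> - of_int n) u | u. trial_fun u \<and> l2_mass M \<rho> u > 0}"
      by (intro CollectI exI[of _ "gauge_transform (- n) v"])
        (simp add: trial_fun_gauge_transform mag_energy_gauge_transform l2_mass_gauge_transform)
  qed
  then show ?thesis by (simp add: mu1_def)
qed

section \<open>Rayleigh quotients\<close>

lemma mag_energy_nonneg: "0 \<le> mag_energy M \<nu> u"
  unfolding mag_energy_def by (rule integral_nonneg_if_nonneg) simp

lemma mu1_le_Rayleigh_quotient:
  assumes "trial_fun u" and "l2_mass M \<rho> u > 0"
  shows "mu1 M \<rho> \<nu> \<le> mag_energy M \<nu> u / l2_mass M \<rho> u"
  unfolding mu1_def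
proof (rule cInf_lower)
  show "mag_energy M \<nu> u / l2_mass M \<rho> u
      \<in> {mag_energy M \<nu> u / l2_mass M \<rho> u | u. trial_fun u \<and> l2_mass M \<rho> u > 0}"
    using assms by blast
  show "bdd_below {mag_energy M \<nu> u / l2_mass M \<rho> u | u. trial_fun u \<and> l2_mass M \<rho> u > 0}"
    by (rule bdd_belowI[of _ 0]) (auto intro: divide_nonneg_pos mag_energy_nonneg)
qed

lemma le_mu1_if_Rayleigh_quotients_ge:
  assumes "trial_fun u0" and "l2_mass M \<rho> u0 > 0"
    and "\<And>u. trial_fun u \<Longrightarrow> l2_mass M \<rho> u > 0 \<Longrightarrow> \<mu> * l2_mass M \<rho> u \<le> mag_energy M \<nu> u"
  shows "\<mu> \<le> mu1 M \<rho> \<nu>"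
  unfolding mu1_def
proof (rule cInf_greatest)
  show "{mag_energy M \<nu> u / l2_mass M \<rho> u | u. trial_fun u \<and> l2_mass M \<rho> u > 0} \<noteq> {}"
    using assms(1,2) by blast
  fix q assume "q \<in> {mag_energy M \<nu> u / l2_mass M \<rho> u | u. trial_fun u \<and> l2_mass M \<rho> u > 0}"
  then obtain u where "q = mag_energy M \<nu> u / l2_mass M \<rho> u" "trial_fun u" "l2_mass M \<rho> u > 0"
    by blast
  then show "\<mu> \<le> q" using assms(3) by (simp add: pos_le_divide_eq)
qed

lemma magnetic_Wirtinger_theta_slice:
  assumes u: "trial_fun u" and \<beta>: "\<bar>\<beta>\<bar> \<le> 1/2"
  shows "\<beta>\<^sup>2 * integral {0..2*pi} (\<lambda>t. (cmod (u (t, z)))\<^sup>2)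
    \<le> integral {0..2*pi} (\<lambda>t. (cmod (d_theta u (t, z) - \<i> * u (t, z) * of_real \<beta>))\<^sup>2)"
proof (rule magnetic_Wirtinger[OF _ _ _ _ \<beta>])
  have diff: "\<And>x. u differentiable (at x)" and periodic: "theta_periodic u"
    and d_theta_cont: "continuous_on UNIV (d_theta u)"
    using u unfolding trial_fun_def by blast+
  show "((\<lambda>t. u (t, z)) has_vector_derivative d_theta u (t, z)) (at t)" for t
    by (rule has_vector_derivative_theta_slice[OF diff])
  show "continuous_on UNIV (\<lambda>t. d_theta u (t, z))"
    by (rule continuous_on_compose2[OF d_theta_cont]) (auto intro: continuous_intros)
  show "u (t + 2*pi, z) = u (t, z)" for t
    using periodic by (simp add: theta_periodic_def)
  show "d_theta u (t + 2*pi, z) = d_theta u (t, z)" for t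
    using theta_periodic_d_theta[OF diff periodic] by (simp add: theta_periodic_def)
qed

lemma mag_energy_ge:
  assumes u: "trial_fun u" and \<beta>: "\<bar>\<beta>\<bar> \<le> 1/2"
  shows "\<beta>\<^sup>2 * integral (fund_dom M) (\<lambda>x. (cmod (u x))\<^sup>2) \<le> mag_energy M \<beta> u"
proof -
  have d_theta_cont: "continuous_on UNIV (d_theta u)" and d_z_cont: "continuous_on UNIV (d_z u)"
    and ucont: "continuous_on UNIV u"
    using u trial_fun_continuous[OF u] unfolding trial_fun_def by blast+
  have slice_cont: "continuous_on UNIV (\<lambda>t. f (t, z))" if "continuous_on UNIV f" for f :: "_ \<Rightarrow> complex" and z
    by (rule continuous_on_compose2[OF that]) (auto intro: continuous_intros)
  define H where "H x = (cmod (d_theta u x - \<i> * u x * of_real \<beta>))\<^sup>2 - \<beta>\<^sup>2 * (cmod (u x))\<^sup>2" for x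
  have "integral {0..2*pi} (\<lambda>t. H (t, z))
      = integral {0..2*pi} (\<lambda>t. (cmod (d_theta u (t, z) - \<i> * u (t, z) * of_real \<beta>))\<^sup>2)
        - \<beta>\<^sup>2 * integral {0..2*pi} (\<lambda>t. (cmod (u (t, z)))\<^sup>2)" for z
    unfolding H_def
    by (intro integral_unique has_integral_diff has_integral_mult_right has_integral_interval_continuous
        continuous_intros slice_cont d_theta_cont ucont)
  then have "0 \<le> integral {0..2*pi} (\<lambda>t. H (t, z))" for z
    using magnetic_Wirtinger_theta_slice[OF u \<beta>, of z] by simp
  moreover have "continuous_on UNIV H"
    unfolding H_def by (intro continuous_intros d_theta_cont ucont)
  ultimately have "0 \<le> integral (fund_dom M) H"
    unfolding fund_dom_def using integral_cbox_nonneg_if_slices_nonneg[OF continuous_on_subset] by blast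
  moreover have "integral (fund_dom M) H
      = integral (fund_dom M) (\<lambda>x. (cmod (d_theta u x - \<i> * u x * of_real \<beta>))\<^sup>2)
        - \<beta>\<^sup>2 * integral (fund_dom M) (\<lambda>x. (cmod (u x))\<^sup>2)"
    unfolding H_def
    by (intro integral_unique has_integral_diff has_integral_mult_right has_integral_fund_dom
        continuous_intros d_theta_cont ucont)
  moreover have "mag_energy M \<beta> u = integral (fund_dom M) (\<lambda>x. (cmod (d_theta u x - \<i> * u x * of_real \<beta>))\<^sup>2)
      + integral (fund_dom M) (\<lambda>x. (cmod (d_z u x))\<^sup>2)"
    unfolding mag_energy_def
    by (intro integral_unique has_integral_add has_integral_fund_dom continuous_intros
        d_theta_cont d_z_cont ucont)
  moreover have "0 \<le> integral (fund_dom M) (\<lambda>x. (cmod (d_z u x))\<^sup>2)"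
    by (rule integral_nonneg_if_nonneg) simp
  ultimately show ?thesis by linarith
qed

lemma mag_energy_const_one: "M \<ge> 0 \<Longrightarrow> mag_energy M \<beta> (\<lambda>_. 1) = 4 * pi * M * \<beta>\<^sup>2"
  unfolding mag_energy_def d_theta_const d_z_const
  using integral_unique[OF has_integral_const_fund_dom[of M "\<beta>\<^sup>2"]] by (simp add: norm_mult)

lemma mag_energy_affine_of_real:
  fixes w :: "real \<times> real \<Rightarrow> real"
  assumes "\<And>x. w differentiable (at x)" and "theta_periodic w"
    and "continuous_on UNIV (d_theta w)" and "continuous_on UNIV (d_z w)"
  shows "mag_energy M \<beta> (\<lambda>x. of_real (a + b * w x))
    = integral (fund_dom M) (\<lambda>x. \<beta>\<^sup>2 * (a + b * w x)\<^sup>2 + b\<^sup>2 * ((d_theta w x)\<^sup>2 + (d_z w x)\<^sup>2))"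
  unfolding mag_energy_def d_theta_affine_of_real[OF assms] d_z_affine_of_real[OF assms] cmod_power2
  by (simp add: power2_eq_square algebra_simps)

lemma l2_mass_of_real: "l2_mass M \<rho> (\<lambda>x. of_real (w x)) = integral (fund_dom M) (\<lambda>x. \<rho> x * (w x)\<^sup>2)"
  by (simp add: l2_mass_def)

lemma
  fixes c t \<beta> :: real
  assumes "M \<ge> 0" and "conf_factor M \<rho>"
  defines "A \<equiv> area M \<rho>"
    and "G \<equiv> integral (fund_dom M) (\<lambda>x. (\<rho> x - c)\<^sup>2)"
    and "Q \<equiv> integral (fund_dom M) (\<lambda>x. \<rho> x * (\<rho> x - c)\<^sup>2)"
    and "R \<equiv> integral (fund_dom M) (\<lambda>x. (d_theta \<rho> x)\<^sup>2 + (d_z \<rho> x)\<^sup>2)"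
  shows mag_energy_perturbation: "mag_energy M \<beta> (\<lambda>x. of_real (1 + t * (\<rho> x - c)))
      = \<beta>\<^sup>2 * (4*pi*M + 2*t * (A - 4*pi*M*c) + t\<^sup>2 * G) + t\<^sup>2 * R"
    and l2_mass_perturbation: "l2_mass M \<rho> (\<lambda>x. of_real (1 + t * (\<rho> x - c)))
      = A + 2*t * (G + c * (A - 4*pi*M*c)) + t\<^sup>2 * Q"
proof -
  note C1 = conf_factor_C1[OF assms(2)]
  have int_A: "(\<rho> has_integral A) (fund_dom M)"
    unfolding A_def area_def by (rule has_integral_fund_dom[OF C1(3)])
  have int_mean: "((\<lambda>x. \<rho> x - c) has_integral A - 4*pi*M*c) (fund_dom M)"
    using has_integral_diff[OF int_A has_integral_const_fund_dom[OF assms(1), of c]] by simp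
  have int_G: "((\<lambda>x. (\<rho> x - c)\<^sup>2) has_integral G) (fund_dom M)"
    unfolding G_def by (intro has_integral_fund_dom continuous_intros C1)
  have "(\<lambda>x. of_real (1 + t * (\<rho> x - c))) = (\<lambda>x. complex_of_real ((1 - t * c) + t * \<rho> x))"
    by (simp add: algebra_simps)
  then have "mag_energy M \<beta> (\<lambda>x. of_real (1 + t * (\<rho> x - c)))
      = integral (fund_dom M) (\<lambda>x. \<beta>\<^sup>2 * ((1 - t * c) + t * \<rho> x)\<^sup>2 + t\<^sup>2 * ((d_theta \<rho> x)\<^sup>2 + (d_z \<rho> x)\<^sup>2))"
    by (simp only: mag_energy_affine_of_real[OF C1(1,2,4,5)])
  also have "\<dots> = integral (fund_dom M) (\<lambda>x. \<beta>\<^sup>2 * (1 + 2*t * (\<rho> x - c) + t\<^sup>2 * (\<rho> x - c)\<^sup>2)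
      + t\<^sup>2 * ((d_theta \<rho> x)\<^sup>2 + (d_z \<rho> x)\<^sup>2))"
    by (simp add: power2_eq_square algebra_simps)
  also have "\<dots> = \<beta>\<^sup>2 * (4*pi*M + 2*t * (A - 4*pi*M*c) + t\<^sup>2 * G) + t\<^sup>2 * R"
    unfolding R_def
    by (intro integral_unique has_integral_add has_integral_mult_right int_mean int_G has_integral_fund_dom
        has_integral_const_fund_dom[OF assms(1), of 1, simplified] continuous_intros C1)
  finally show "mag_energy M \<beta> (\<lambda>x. of_real (1 + t * (\<rho> x - c)))
      = \<beta>\<^sup>2 * (4*pi*M + 2*t * (A - 4*pi*M*c) + t\<^sup>2 * G) + t\<^sup>2 * R" .
  have "l2_mass M \<rho> (\<lambda>x. of_real (1 + t * (\<rho> x - c))) = integral (fund_dom M)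
      (\<lambda>x. \<rho> x + 2*t * ((\<rho> x - c)\<^sup>2 + c * (\<rho> x - c)) + t\<^sup>2 * (\<rho> x * (\<rho> x - c)\<^sup>2))"
    unfolding l2_mass_of_real by (simp add: power2_eq_square algebra_simps)
  also have "\<dots> = A + 2*t * (G + c * (A - 4*pi*M*c)) + t\<^sup>2 * Q"
    unfolding Q_def
    by (intro integral_unique has_integral_add has_integral_mult_right int_A int_mean int_G
        has_integral_fund_dom continuous_intros C1)
  finally show "l2_mass M \<rho> (\<lambda>x. of_real (1 + t * (\<rho> x - c))) = A + 2*t * (G + c * (A - 4*pi*M*c)) + t\<^sup>2 * Q" .
qed

section \<open>The bound and its equality case\<close>

lemma INF_dist_Ints_sq:
  fixes \<nu> :: real
  shows "(INF n::int. \<bar>\<nu> - of_int n\<bar>\<^sup>2) = (\<nu> - of_int (round \<nu>))\<^sup>2"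
proof (rule cInf_eq_minimum)
  show "(\<nu> - of_int (round \<nu>))\<^sup>2 \<in> range (\<lambda>n::int. \<bar>\<nu> - of_int n\<bar>\<^sup>2)" by simp
  show "(\<nu> - of_int (round \<nu>))\<^sup>2 \<le> q" if q_range: "q \<in> range (\<lambda>n::int. \<bar>\<nu> - of_int n\<bar>\<^sup>2)" for q
  proof -
    obtain n :: int where q: "q = \<bar>\<nu> - of_int n\<bar>\<^sup>2" using q_range by blast
    have "\<bar>\<nu> - of_int (round \<nu>)\<bar>\<^sup>2 \<le> \<bar>\<nu> - of_int n\<bar>\<^sup>2"
      by (rule power_mono[OF round_diff_minimal abs_ge_zero])
    then show ?thesis by (simp add: q)
  qed
qed

lemma linear_le_quadratic_imp_nonpos:
  fixes a b :: real
  assumes "\<And>t. t > 0 \<Longrightarrow> a * t \<le> b * t\<^sup>2"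
  shows "a \<le> 0"
proof (rule ccontr)
  assume "\<not> a \<le> 0"
  define t where "t = a / (2 * (\<bar>b\<bar> + 1))"
  have "\<bar>b\<bar> + 1 > 0" by simp
  have "t > 0" using \<open>\<not> a \<le> 0\<close> by (simp add: t_def)
  then have "a \<le> b * t" using assms[of t] by (simp add: power2_eq_square)
  also have "\<dots> \<le> (\<bar>b\<bar> + 1) * t" using \<open>t > 0\<close> by (intro mult_right_mono) auto
  also have "\<dots> = a / 2" using \<open>\<bar>b\<bar> + 1 > 0\<close> by (simp add: t_def field_simps)
  finally show False using \<open>\<not> a \<le> 0\<close> by simp
qed

lemma area_mu1_le:
  assumes "M > 0" and "conf_factor M \<rho>"
  shows "area M \<rho> * mu1 M \<rho> \<beta> \<le> 4 * pi * M * \<beta>\<^sup>2"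
proof -
  have "l2_mass M \<rho> (\<lambda>_. 1) = area M \<rho>" by (simp add: l2_mass_def area_def)
  then have "mu1 M \<rho> \<beta> \<le> 4 * pi * M * \<beta>\<^sup>2 / area M \<rho>"
    using mu1_le_Rayleigh_quotient[OF trial_fun_const[of 1], of M \<rho> \<beta>] area_pos[OF assms]
      mag_energy_const_one[of M \<beta>] assms(1) by simp
  then show ?thesis using area_pos[OF assms] by (simp add: pos_le_divide_eq mult.commute)
qed

lemma area_mu1_ge_if_homothetic_flat:
  assumes "M > 0" and "homothetic_flat M \<rho>" and "\<bar>\<beta>\<bar> \<le> 1/2"
  shows "4 * pi * M * \<beta>\<^sup>2 \<le> area M \<rho> * mu1 M \<rho> \<beta>"
proof -
  obtain c where "c > 0" and \<rho>_eq: "\<And>x. x \<in> fund_dom M \<Longrightarrow> \<rho> x = c"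
    using assms(2) fund_dom_subset_strip unfolding homothetic_flat_def by blast
  have mass: "l2_mass M \<rho> u = c * integral (fund_dom M) (\<lambda>x. (cmod (u x))\<^sup>2)" for u
    unfolding l2_mass_def by (simp add: \<rho>_eq cong: integral_cong)
  have area: "area M \<rho> = 4 * pi * M * c"
    unfolding area_def using integral_unique[OF has_integral_const_fund_dom[of M c]] assms(1)
    by (simp add: \<rho>_eq cong: integral_cong)
  have "\<beta>\<^sup>2 / c \<le> mu1 M \<rho> \<beta>"
  proof (rule le_mu1_if_Rayleigh_quotients_ge[OF trial_fun_const])
    show "l2_mass M \<rho> (\<lambda>_. 1) > 0"
      using area \<open>c > 0\<close> assms(1) by (simp add: l2_mass_def area_def)
    show "\<beta>\<^sup>2 / c * l2_mass M \<rho> u \<le> mag_energy M \<beta> u" if "trial_fun u" for u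
      using mag_energy_ge[OF that assms(3)] \<open>c > 0\<close> by (simp add: mass)
  qed
  then show ?thesis
    using \<open>c > 0\<close> assms(1) by (simp add: area field_simps)
qed

lemma area_mu1_eq_imp_perturbation_ineq:
  fixes t :: real
  assumes "M > 0" and "conf_factor M \<rho>" and eq: "area M \<rho> * mu1 M \<rho> \<beta> = 4 * pi * M * \<beta>\<^sup>2"
    and "t > 0"
  defines "A \<equiv> area M \<rho>" and "D \<equiv> 4 * pi * M"
  defines "c \<equiv> A / D"
  defines "G \<equiv> integral (fund_dom M) (\<lambda>x. (\<rho> x - c)\<^sup>2)"
    and "Q \<equiv> integral (fund_dom M) (\<lambda>x. \<rho> x * (\<rho> x - c)\<^sup>2)"
    and "R \<equiv> integral (fund_dom M) (\<lambda>x. (d_theta \<rho> x)\<^sup>2 + (d_z \<rho> x)\<^sup>2)"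
  shows "2 * (\<beta>\<^sup>2 * D * G) * t \<le> (A * \<beta>\<^sup>2 * G + A * R - \<beta>\<^sup>2 * D * Q) * t\<^sup>2"
proof -
  have "A > 0" "D > 0" using area_pos[OF assms(1,2)] assms(1) by (simp_all add: A_def D_def)
  then have mean_zero: "A - D * c = 0" by (simp add: c_def)
  have "G \<ge> 0" "Q \<ge> 0"
    unfolding G_def Q_def using conf_factor_pos[OF assms(2)]
    by (auto intro!: integral_nonneg_if_nonneg simp: less_imp_le)
  have mu1_eq: "mu1 M \<rho> \<beta> = \<beta>\<^sup>2 * D / A"
    using eq \<open>A > 0\<close> by (simp add: A_def D_def field_simps)
  let ?u = "\<lambda>x. complex_of_real (1 + t * (\<rho> x - c))"
  have u_eq: "?u = (\<lambda>x. of_real ((1 - t * c) + t * \<rho> x))" by (simp add: algebra_simps)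
  have "trial_fun ?u"
    unfolding u_eq by (rule trial_fun_affine_of_real[OF conf_factor_C1(1,2,4,5)[OF assms(2)]])
  \<comment> \<open>Because \<open>c\<close> is the mean of \<open>\<rho>\<close>, the energy has no term linear in \<open>t\<close>, while the mass has \<open>2 t G\<close>.\<close>
  have energy: "mag_energy M \<beta> ?u = \<beta>\<^sup>2 * (D + t\<^sup>2 * G) + t\<^sup>2 * R"
    using mag_energy_perturbation[OF _ assms(2), where c = c and t = t and \<beta> = \<beta>] assms(1) mean_zero
    by (simp add: A_def D_def G_def R_def)
  have mass: "l2_mass M \<rho> ?u = A + 2 * t * G + t\<^sup>2 * Q"
    using l2_mass_perturbation[OF _ assms(2), where c = c and t = t] assms(1) mean_zero
    by (simp add: A_def D_def G_def Q_def)
  have "l2_mass M \<rho> ?u > 0"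
    unfolding mass using \<open>A > 0\<close> \<open>G \<ge> 0\<close> \<open>Q \<ge> 0\<close> \<open>t > 0\<close> by (intro add_pos_nonneg) auto
  from mu1_le_Rayleigh_quotient[OF \<open>trial_fun ?u\<close> this, of \<beta>] this
  have "\<beta>\<^sup>2 * D * (A + 2 * t * G + t\<^sup>2 * Q) \<le> A * (\<beta>\<^sup>2 * (D + t\<^sup>2 * G) + t\<^sup>2 * R)"
    using \<open>A > 0\<close> unfolding mu1_eq energy mass by (simp add: field_simps)
  moreover have "A * (\<beta>\<^sup>2 * (D + t\<^sup>2 * G) + t\<^sup>2 * R) - \<beta>\<^sup>2 * D * (A + 2 * t * G + t\<^sup>2 * Q)
      = (A * \<beta>\<^sup>2 * G + A * R - \<beta>\<^sup>2 * D * Q) * t\<^sup>2 - 2 * (\<beta>\<^sup>2 * D * G) * t"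
    by (simp add: power2_eq_square algebra_simps)
  ultimately show ?thesis by linarith
qed

lemma homothetic_flat_if_area_mu1_eq:
  assumes "M > 0" and "conf_factor M \<rho>" and "\<beta> \<noteq> 0"
    and eq: "area M \<rho> * mu1 M \<rho> \<beta> = 4 * pi * M * \<beta>\<^sup>2"
  shows "homothetic_flat M \<rho>"
proof -
  define c where "c = area M \<rho> / (4 * pi * M)"
  define G where "G = integral (fund_dom M) (\<lambda>x. (\<rho> x - c)\<^sup>2)"
  have "c > 0" using area_pos[OF assms(1,2)] assms(1) by (simp add: c_def)
  have "G \<ge> 0" unfolding G_def by (rule integral_nonneg_if_nonneg) simp
  have "2 * (\<beta>\<^sup>2 * (4 * pi * M) * G) \<le> 0"
    using area_mu1_eq_imp_perturbation_ineq[OF assms(1,2) eq]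
    unfolding G_def c_def by (rule linear_le_quadratic_imp_nonpos)
  then have "G = 0"
    using \<open>G \<ge> 0\<close> assms(1,3) pi_gt_zero by (auto simp: mult_le_0_iff)
  then have \<rho>_const: "\<rho> x = c" if "x \<in> fund_dom M" for x
    using integral_fund_dom_eq_0_iff[OF assms(1), of "\<lambda>x. (\<rho> x - c)\<^sup>2"] that
    by (simp add: G_def continuous_intros conf_factor_C1(3)[OF assms(2)])
  show ?thesis
    unfolding homothetic_flat_def
  proof (intro exI[of _ c] conjI ballI)
    show "c > 0" by fact
    show "\<rho> x = c" if "x \<in> strip M" for x
      by (rule theta_periodic_const_on_strip[OF conf_factor_C1(2)[OF assms(2)] \<rho>_const that])
  qed
qed

theorem theorem2p6:
  fixes M \<nu> :: real and \<rho> :: "real \<times> real \<Rightarrow> real"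
  assumes "M > 0" and "conf_factor M \<rho>" and "\<nu> \<notin> \<int>"
  shows "area M \<rho> * mu1 M \<rho> \<nu> \<le> 4 * pi * M * (INF n::int. \<bar>\<nu> - of_int n\<bar>\<^sup>2)
    \<and> (area M \<rho> * mu1 M \<rho> \<nu> = 4 * pi * M * (INF n::int. \<bar>\<nu> - of_int n\<bar>\<^sup>2)
         \<longleftrightarrow> homothetic_flat M \<rho>)"
proof -
  define \<beta> where "\<beta> = \<nu> - of_int (round \<nu>)"
  have mu1: "mu1 M \<rho> \<nu> = mu1 M \<rho> \<beta>"
    unfolding \<beta>_def by (rule mu1_gauge_invariant[symmetric])
  have INF: "(INF n::int. \<bar>\<nu> - of_int n\<bar>\<^sup>2) = \<beta>\<^sup>2"
    unfolding \<beta>_def by (rule INF_dist_Ints_sq)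
  have "\<bar>\<beta>\<bar> \<le> 1/2"
    using of_int_round_abs_le[of \<nu>] by (simp add: \<beta>_def abs_minus_commute)
  have "\<beta> \<noteq> 0"
    using assms(3) Ints_of_int[of "round \<nu>"] by (metis \<beta>_def eq_iff_diff_eq_0)
  have le: "area M \<rho> * mu1 M \<rho> \<beta> \<le> 4 * pi * M * \<beta>\<^sup>2"
    by (rule area_mu1_le[OF assms(1,2)])
  moreover have "area M \<rho> * mu1 M \<rho> \<beta> = 4 * pi * M * \<beta>\<^sup>2 \<longleftrightarrow> homothetic_flat M \<rho>"
    using le area_mu1_ge_if_homothetic_flat[OF assms(1) _ \<open>\<bar>\<beta>\<bar> \<le> 1/2\<close>]
      homothetic_flat_if_area_mu1_eq[OF assms(1,2) \<open>\<beta> \<noteq> 0\<close>] by fastforce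
  ultimately show ?thesis unfolding mu1 INF by blast
qed

end
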